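(* Let $G$ be a finite two-player zero-sum game with finite pure strategy sets $S_1,S_2$ and payoffs $v_1=-v_2$, extended bilinearly to mixed strategies. Run Anytime Double Oracle (ADO) from nonempty initial populations $\Pi^0_1\subseteq S_1$, $\Pi^0_2\subseteq S_2$: at each iteration $t$, for each $i\in\{1,2\}$ let $\pi^r_i$ be player $i$'s Nash equilibrium strategy in the restricted game $G^i$, in which player $i$ may only play mixed strategies supported on $\Pi^t_i$ while player $-i$ may play any mixed strategy in $\Delta(S_{-i})$ (i.e. $\pi^r_i\in\arg\max_{\sigma_i\in\Delta(\Pi^t_i)}\min_{\sigma_{-i}\in\Delta(S_{-i})}v_i(\sigma_i,\sigma_{-i})$); then for each $i$ add to $\Pi^t_i$ a pure best response of player $i$ to $\pi^r_{-i}$, chosen outside $\Pi^t_i$ whenever possible. ADO terminates at an iteration $t$ at which, for neither player $i\in\{1,2\}$, there exists a pure best response to $\pi^r_{-i}$ that is not in $\Pi^t_i$. Then, when ADO terminates, the profile $(\pi^r_1,\pi^r_2)$ is a Nash equilibrium of the full game $G$.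
   Context: $\Delta(X)$ denotes the set of mixed strategies supported on the set $X$ of pure strategies. A best response of player $i$ to $\pi_{-i}$ is a strategy maximizing $v_i(\cdot,\pi_{-i})$ over all strategies of player $i$ in the full game. A Nash equilibrium of $G$ is a profile $(\pi_1,\pi_2)$ such that for each $i$, $v_i(\pi_i,\pi_{-i})=\max_{\pi_i'}v_i(\pi_i',\pi_{-i})$. *)

theory Defs
  imports Complex_Main
begin

definition mixed :: "'a set \<Rightarrow> ('a \<Rightarrow> real) \<Rightarrow> bool" where
  "mixed X \<sigma> \<longleftrightarrow> (\<forall>x. 0 \<le> \<sigma> x) \<and> (\<forall>x. x \<notin> X \<longrightarrow> \<sigma> x = 0) \<and> sum \<sigma> X = 1"

definition pure :: "'a \<Rightarrow> ('a \<Rightarrow> real)" where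
  "pure s = (\<lambda>x. if x = s then 1 else 0)"

definition v1 :: "'a set \<Rightarrow> 'b set \<Rightarrow> ('a \<Rightarrow> 'b \<Rightarrow> real) \<Rightarrow> ('a \<Rightarrow> real) \<Rightarrow> ('b \<Rightarrow> real) \<Rightarrow> real" where
  "v1 S1 S2 u \<sigma>1 \<sigma>2 = (\<Sum>x\<in>S1. \<Sum>y\<in>S2. \<sigma>1 x * \<sigma>2 y * u x y)"

definition v2 :: "'a set \<Rightarrow> 'b set \<Rightarrow> ('a \<Rightarrow> 'b \<Rightarrow> real) \<Rightarrow> ('b \<Rightarrow> real) \<Rightarrow> ('a \<Rightarrow> real) \<Rightarrow> real" where
  "v2 S1 S2 u \<sigma>2 \<sigma>1 = - v1 S1 S2 u \<sigma>1 \<sigma>2"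

text \<open>Nash-equilibrium strategy of the restricted player in the restricted game G^i:
  pi in argmax over Delta(P) of min over Delta(T) of v(sigma, tau), where v is the player's payoff
  (own strategy first), P the player's population, T the opponent's full pure strategy set.\<close>
definition restricted_eq_strategy ::
  "('c \<Rightarrow> real) \<Rightarrow> 'c set \<Rightarrow> 'd set \<Rightarrow> (('c \<Rightarrow> real) \<Rightarrow> ('d \<Rightarrow> real) \<Rightarrow> real) \<Rightarrow> bool" where
  "restricted_eq_strategy \<pi> P T v \<longleftrightarrow> mixed P \<pi> \<and>
     (\<forall>\<sigma>. mixed P \<sigma> \<longrightarrow>
        (INF \<tau>\<in>{\<tau>. mixed T \<tau>}. v \<sigma> \<tau>) \<le> (INF \<tau>\<in>{\<tau>. mixed T \<tau>}. v \<pi> \<tau>))"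

definition pure_best_response ::
  "'c \<Rightarrow> 'c set \<Rightarrow> (('c \<Rightarrow> real) \<Rightarrow> ('d \<Rightarrow> real) \<Rightarrow> real) \<Rightarrow> ('d \<Rightarrow> real) \<Rightarrow> bool" where
  "pure_best_response s S v \<tau> \<longleftrightarrow> s \<in> S \<and> (\<forall>\<sigma>. mixed S \<sigma> \<longrightarrow> v \<sigma> \<tau> \<le> v (pure s) \<tau>)"

definition nash_eq ::
  "'a set \<Rightarrow> 'b set \<Rightarrow> ('a \<Rightarrow> 'b \<Rightarrow> real) \<Rightarrow> ('a \<Rightarrow> real) \<Rightarrow> ('b \<Rightarrow> real) \<Rightarrow> bool" where
  "nash_eq S1 S2 u \<pi>1 \<pi>2 \<longleftrightarrow> mixed S1 \<pi>1 \<and> mixed S2 \<pi>2 \<and>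
     (\<forall>\<sigma>1. mixed S1 \<sigma>1 \<longrightarrow> v1 S1 S2 u \<sigma>1 \<pi>2 \<le> v1 S1 S2 u \<pi>1 \<pi>2) \<and>
     (\<forall>\<sigma>2. mixed S2 \<sigma>2 \<longrightarrow> v2 S1 S2 u \<sigma>2 \<pi>1 \<le> v2 S1 S2 u \<pi>2 \<pi>1)"

end

theory Submission
  imports Defs "HOL-Analysis.Analysis"
begin

(* Let b1 be the security level of pi1 against all of S2 and b2 that of pi2 against all of S1.
   Since pi1 maximises its security level over Delta(P1), perturbing pi1 towards any sigma in
   Delta(P1) shows that some column which is binding for pi1, i.e. a pure best response of
   player 2 to pi1, holds sigma to at most b1; at termination such a column lies in P2.
   Symmetrically for player 2. Applied to a saddle point of the restricted game P1 x P2, which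
   exists by von Neumann's minimax theorem (Loomis' induction), this gives -b2 <= b1,
   and that inequality between the guaranteed payoffs is exactly the Nash condition. *)

definition expected_payoff :: "'c set \<Rightarrow> ('c \<Rightarrow> 'd \<Rightarrow> real) \<Rightarrow> ('c \<Rightarrow> real) \<Rightarrow> 'd \<Rightarrow> real" where
  "expected_payoff I w x j = (\<Sum>i\<in>I. x i * w i j)"

definition opponent_payoff :: "('c \<Rightarrow> 'd \<Rightarrow> real) \<Rightarrow> 'd \<Rightarrow> 'c \<Rightarrow> real" where
  "opponent_payoff w = (\<lambda>j i. - w i j)"

definition security_level :: "'c set \<Rightarrow> 'd set \<Rightarrow> ('c \<Rightarrow> 'd \<Rightarrow> real) \<Rightarrow> ('c \<Rightarrow> real) \<Rightarrow> real" where
  "security_level I J w x = Min (expected_payoff I w x ` J)"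

(* - expected_payoff J (opponent_payoff w) y i is the row player's payoff of i against y. *)
definition has_saddle_point :: "'c set \<Rightarrow> 'd set \<Rightarrow> ('c \<Rightarrow> 'd \<Rightarrow> real) \<Rightarrow> bool" where
  "has_saddle_point I J w \<longleftrightarrow> (\<exists>x y. mixed I x \<and> mixed J y \<and>
      (\<forall>i\<in>I. \<forall>j\<in>J. - expected_payoff J (opponent_payoff w) y i \<le> expected_payoff I w x j))"

lemma opponent_payoff_opponent_payoff [simp]: "opponent_payoff (opponent_payoff w) = w"
  by (simp add: opponent_payoff_def)

lemma has_saddle_point_opponent_payoff:
  "has_saddle_point I J w \<Longrightarrow> has_saddle_point J I (opponent_payoff w)"
  unfolding has_saddle_point_def by auto (metis neg_le_iff_le minus_minus)

lemma mixed_pure: "finite I \<Longrightarrow> i \<in> I \<Longrightarrow> mixed I (pure i)"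
  unfolding mixed_def pure_def by auto

lemma sum_pure_mult: "finite I \<Longrightarrow> i \<in> I \<Longrightarrow> (\<Sum>j\<in>I. pure i j * c j) = c i"
  by (simp add: pure_def if_distrib[of "\<lambda>a. a * _"] cong: if_cong)

lemma mixed_le_one: "finite I \<Longrightarrow> mixed I x \<Longrightarrow> x i \<le> 1"
  unfolding mixed_def by (metis member_le_sum zero_less_one_class.zero_le_one)

lemma mixed_subset:
  assumes "mixed J' y" "J' \<subseteq> J" "finite J"
  shows "mixed J y"
proof -
  have "sum y J = sum y J'"
    using assms by (intro sum.mono_neutral_right) (auto simp: mixed_def)
  then show ?thesis
    using assms by (auto simp: mixed_def)
qed

lemma mixed_convex_combination:
  assumes "mixed I x" "mixed I y" "0 \<le> e" "e \<le> 1"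
  shows "mixed I (\<lambda>i. (1 - e) * x i + e * y i)"
  using assms unfolding mixed_def
  by (auto simp: sum.distrib sum_distrib_left[symmetric])

lemma expected_payoff_convex_combination:
  "expected_payoff I w (\<lambda>i. (1 - e) * x i + e * y i) j
     = (1 - e) * expected_payoff I w x j + e * expected_payoff I w y j"
  unfolding expected_payoff_def
  by (simp add: sum.distrib sum_subtractf sum_distrib_left algebra_simps)

lemma expected_payoff_support:
  "mixed J' y \<Longrightarrow> J' \<subseteq> J \<Longrightarrow> finite J \<Longrightarrow> expected_payoff J w y i = expected_payoff J' w y i"
  unfolding expected_payoff_def mixed_def by (intro sum.mono_neutral_right) auto

lemma mixed_expectation_const: "mixed I x \<Longrightarrow> (\<Sum>i\<in>I. x i * m) = m"
  by (simp add: mixed_def sum_distrib_right[symmetric])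

lemma mixed_expectation_ge:
  assumes "mixed I x" "\<And>i. i \<in> I \<Longrightarrow> m \<le> c i"
  shows "m \<le> (\<Sum>i\<in>I. x i * c i)"
proof -
  have "(\<Sum>i\<in>I. x i * m) \<le> (\<Sum>i\<in>I. x i * c i)"
    using assms by (intro sum_mono mult_left_mono) (auto simp: mixed_def)
  then show ?thesis
    using mixed_expectation_const[OF assms(1)] by simp
qed

lemma sum_expected_payoff_opponent:
  "(\<Sum>j\<in>J. y j * expected_payoff I w x j) = - (\<Sum>i\<in>I. x i * expected_payoff J (opponent_payoff w) y i)"
proof -
  have "(\<Sum>j\<in>J. y j * expected_payoff I w x j) = (\<Sum>i\<in>I. \<Sum>j\<in>J. x i * y j * w i j)"
    unfolding expected_payoff_def by (subst sum.swap) (simp add: sum_distrib_left algebra_simps)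
  then show ?thesis
    unfolding expected_payoff_def opponent_payoff_def by (simp add: sum_distrib_left sum_negf algebra_simps)
qed

lemma security_level_le:
  "finite J \<Longrightarrow> j \<in> J \<Longrightarrow> security_level I J w x \<le> expected_payoff I w x j"
  unfolding security_level_def by simp

lemma security_level_le_mixed:
  "finite J \<Longrightarrow> mixed J y \<Longrightarrow> security_level I J w x \<le> (\<Sum>j\<in>J. y j * expected_payoff I w x j)"
  by (auto intro: mixed_expectation_ge security_level_le)

lemma security_level_attained:
  assumes "finite J" "J \<noteq> {}"
  obtains j where "j \<in> J" "expected_payoff I w x j = security_level I J w x"
proof -
  have "security_level I J w x \<in> expected_payoff I w x ` J"
    unfolding security_level_def using assms by (intro Min_in) auto
  then show ?thesis
    using that by auto
qed

lemma compact_mixed: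
  assumes "finite I"
  shows "compact {x :: 'c \<Rightarrow> real. mixed I x}"
proof -
  define S where "S = (\<lambda>i. if i \<in> I then {0..1::real} else {0})"
  have "compactin (product_topology (\<lambda>i. euclidean) UNIV) (PiE UNIV S)"
    by (subst compactin_PiE) (auto simp: S_def)
  then have "compact (PiE UNIV S)"
    by (simp add: euclidean_product_topology)
  moreover have "closed {x :: 'c \<Rightarrow> real. sum x I = 1}"
    by (intro closed_Collect_eq continuous_intros continuous_on_sum continuous_on_product_coordinates)
  moreover have "{x :: 'c \<Rightarrow> real. mixed I x} = PiE UNIV S \<inter> {x. sum x I = 1}"
  proof (intro set_eqI iffI)
    fix x :: "'c \<Rightarrow> real"
    assume "x \<in> {x. mixed I x}"
    then show "x \<in> PiE UNIV S \<inter> {x. sum x I = 1}"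
      using assms by (auto simp: S_def mixed_def PiE_def extensional_def Pi_iff mixed_le_one)
  next
    fix x :: "'c \<Rightarrow> real"
    assume "x \<in> PiE UNIV S \<inter> {x. sum x I = 1}"
    then show "x \<in> {x. mixed I x}"
      unfolding mixed_def S_def by (auto simp: PiE_def Pi_iff split: if_splits)
  qed
  ultimately show ?thesis by auto
qed

lemma continuous_on_Min:
  fixes g :: "'d \<Rightarrow> 'x::topological_space \<Rightarrow> real"
  assumes "finite J" "J \<noteq> {}" "\<And>j. j \<in> J \<Longrightarrow> continuous_on K (g j)"
  shows "continuous_on K (\<lambda>x. Min ((\<lambda>j. g j x) ` J))"
  using assms
proof (induction J rule: finite_ne_induct)
  case (insert j J)
  then have "(\<lambda>x. Min ((\<lambda>j. g j x) ` insert j J)) = (\<lambda>x. min (g j x) (Min ((\<lambda>j. g j x) ` J)))"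
    by auto
  then show ?case using insert by (auto intro!: continuous_on_min)
qed simp

lemma maximin_strategy_exists:
  assumes "finite I" "finite J" "I \<noteq> {}" "J \<noteq> {}"
  obtains x where "mixed I x" "\<And>x'. mixed I x' \<Longrightarrow> security_level I J w x' \<le> security_level I J w x"
proof -
  have "continuous_on {x. mixed I x} (\<lambda>x. Min ((\<lambda>j. expected_payoff I w x j) ` J))"
    using assms unfolding expected_payoff_def
    by (intro continuous_on_Min continuous_intros continuous_on_sum continuous_on_mult
          continuous_on_product_coordinates[THEN continuous_on_subset]) auto
  then have cont: "continuous_on {x. mixed I x} (security_level I J w)"
    by (simp add: security_level_def[abs_def])
  obtain i where "i \<in> I"
    using assms(3) by blast
  then have ne: "{x. mixed I x} \<noteq> {}"
    using mixed_pure[OF assms(1)] by auto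
  obtain x where "mixed I x" "\<forall>x'\<in>{x. mixed I x}. security_level I J w x' \<le> security_level I J w x"
    using continuous_attains_sup[OF compact_mixed[OF assms(1)] ne cont] by auto
  then show ?thesis
    using that by auto
qed

lemma maximin_local_optimality:
  assumes "finite J" "J \<noteq> {}" "mixed P \<pi>" "mixed P \<sigma>"
    and opt: "\<And>\<sigma>'. mixed P \<sigma>' \<Longrightarrow> security_level I J w \<sigma>' \<le> security_level I J w \<pi>"
  obtains j where "j \<in> J" "expected_payoff I w \<pi> j = security_level I J w \<pi>"
    "expected_payoff I w \<sigma> j \<le> security_level I J w \<pi>"
(* Otherwise moving \<pi> slightly towards \<sigma> lifts every column above the security level of \<pi>:
   slack columns by continuity, binding ones because \<sigma> does strictly better on them. *)
proof (rule ccontr)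
  note witness = that
  assume no_witness: "\<not> thesis"
  define b where "b = security_level I J w \<pi>"
  define mix where "mix e = (\<lambda>i. (1 - e) * \<pi> i + e * \<sigma> i)" for e :: real
  have "\<forall>\<^sub>F e in at_right 0. b < expected_payoff I w (mix e) j" if "j \<in> J" for j
  proof (cases "b < expected_payoff I w \<pi> j")
    case True
    have "((\<lambda>e. (1 - e) * expected_payoff I w \<pi> j + e * expected_payoff I w \<sigma> j)
            \<longlongrightarrow> (1 - 0) * expected_payoff I w \<pi> j + 0 * expected_payoff I w \<sigma> j) (at_right 0)"
      by (intro tendsto_intros)
    then show ?thesis
      using True unfolding mix_def expected_payoff_convex_combination by (intro order_tendstoD) auto
  next
    case False
    then have binding: "expected_payoff I w \<pi> j = b"
      using security_level_le[OF assms(1) that, of I w \<pi>] unfolding b_def by linarith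
    then have improves: "b < expected_payoff I w \<sigma> j"
      using no_witness witness[OF that] unfolding b_def by (meson not_le)
    show ?thesis
      using eventually_at_right_less[of 0]
    proof (rule eventually_mono)
      fix e :: real
      assume "0 < e"
      then show "b < expected_payoff I w (mix e) j"
        using mult_strict_left_mono[OF improves] binding
        unfolding mix_def expected_payoff_convex_combination by (simp add: algebra_simps)
    qed
  qed
  then have "\<forall>\<^sub>F e in at_right 0. b < security_level I J w (mix e)"
    using assms(1,2) by (simp add: eventually_ball_finite security_level_def Min_gr_iff)
  moreover have "\<forall>\<^sub>F e in at_right 0. security_level I J w (mix e) \<le> b"
    using eventually_at_right_real[of 0 1]
    by (rule eventually_mono) (auto simp: b_def mix_def intro!: opt mixed_convex_combination assms)
  ultimately have "\<forall>\<^sub>F e in at_right (0::real). False"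
    by eventually_elim simp
  then show False
    by simp
qed

lemma minimax_inequality_drop_column:
  assumes fin: "finite I" "finite J" "I \<noteq> {}" "J \<noteq> {}"
    and saddle: "has_saddle_point I (J - {k}) w"
    and x0: "mixed I x0" "\<And>x. mixed I x \<Longrightarrow> security_level I J w x \<le> security_level I J w x0"
    and y0: "\<And>y. mixed J y \<Longrightarrow>
               security_level J I (opponent_payoff w) y \<le> security_level J I (opponent_payoff w) y0"
    and slack: "security_level I J w x0 < expected_payoff I w x0 k"
  shows "- security_level J I (opponent_payoff w) y0 \<le> security_level I J w x0"
proof -
  obtain x y where x: "mixed I x" and y: "mixed (J - {k}) y"
    and xy: "\<And>i j. i \<in> I \<Longrightarrow> j \<in> J - {k} \<Longrightarrow>
               - expected_payoff (J - {k}) (opponent_payoff w) y i \<le> expected_payoff I w x j"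
    using saddle unfolding has_saddle_point_def by blast
  obtain j where j: "j \<in> J" "expected_payoff I w x0 j = security_level I J w x0"
    and x_j: "expected_payoff I w x j \<le> security_level I J w x0"
    using maximin_local_optimality[OF fin(2,4) x0(1) x x0(2)] by blast
  have "j \<noteq> k"
    using j slack by auto
  have "- security_level I J w x0 \<le> expected_payoff J (opponent_payoff w) y i" if "i \<in> I" for i
  proof -
    have "- expected_payoff (J - {k}) (opponent_payoff w) y i \<le> expected_payoff I w x j"
      using xy[OF that] \<open>j \<noteq> k\<close> j(1) by blast
    then show ?thesis
      using x_j expected_payoff_support[OF y Diff_subset fin(2), of "opponent_payoff w" i] by linarith
  qed
  then have "- security_level I J w x0 \<le> security_level J I (opponent_payoff w) y"
    using fin unfolding security_level_def by (simp add: Min_ge_iff)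
  also have "\<dots> \<le> security_level J I (opponent_payoff w) y0"
    using y0 mixed_subset[OF y _ fin(2)] by blast
  finally show ?thesis
    by simp
qed

(* Loomis: delete a column that is slack for an optimal x0, or a row that is slack for an
   optimal y0; if there is none, both strategies are equalising and their values coincide. *)
theorem minimax_has_saddle_point:
  "finite I \<Longrightarrow> finite J \<Longrightarrow> I \<noteq> {} \<Longrightarrow> J \<noteq> {} \<Longrightarrow> has_saddle_point I J w"
proof (induction "card I + card J" arbitrary: I J rule: less_induct)
  case less
  note fin = less.prems
  obtain x0 where x0: "mixed I x0" "\<And>x. mixed I x \<Longrightarrow> security_level I J w x \<le> security_level I J w x0"
    using maximin_strategy_exists[OF fin] by blast
  obtain y0 where y0: "mixed J y0" "\<And>y. mixed J y \<Longrightarrow>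
      security_level J I (opponent_payoff w) y \<le> security_level J I (opponent_payoff w) y0"
    using maximin_strategy_exists[OF fin(2,1,4,3)] by blast
  define v where "v = security_level I J w x0"
  define v' where "v' = security_level J I (opponent_payoff w) y0"
  have value_order: "- v' \<le> v"
  proof (cases "\<exists>k\<in>J. v < expected_payoff I w x0 k")
    case True
    then obtain k where k: "k \<in> J" "v < expected_payoff I w x0 k"
      by blast
    obtain j where "j \<in> J" "expected_payoff I w x0 j = v"
      using security_level_attained[OF fin(2,4)] unfolding v_def by metis
    then have "J - {k} \<noteq> {}"
      using k by auto
    moreover have "card (J - {k}) < card J"
      using card_Diff1_less[OF fin(2) k(1)] .
    ultimately have "has_saddle_point I (J - {k}) w"
      using less.hyps[of I "J - {k}"] fin by auto
    then show ?thesis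
      using minimax_inequality_drop_column[OF fin _ x0 y0(2)] k unfolding v_def v'_def by blast
  next
    case no_slack_J: False
    show ?thesis
    proof (cases "\<exists>k\<in>I. v' < expected_payoff J (opponent_payoff w) y0 k")
      case True
      then obtain k where k: "k \<in> I" "v' < expected_payoff J (opponent_payoff w) y0 k"
        by blast
      obtain i where "i \<in> I" "expected_payoff J (opponent_payoff w) y0 i = v'"
        using security_level_attained[OF fin(1,3)] unfolding v'_def by metis
      then have "I - {k} \<noteq> {}"
        using k by auto
      moreover have "card (I - {k}) < card I"
        using card_Diff1_less[OF fin(1) k(1)] .
      ultimately have "has_saddle_point (I - {k}) J w"
        using less.hyps[of "I - {k}" J] fin by auto
      then have "- v \<le> v'"
        using minimax_inequality_drop_column[OF fin(2,1,4,3) has_saddle_point_opponent_payoff y0] x0(2) k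
        unfolding v_def v'_def by simp
      then show ?thesis
        by simp
    next
      case False
      have binding_J: "expected_payoff I w x0 j = v" if "j \<in> J" for j
        using no_slack_J security_level_le[OF fin(2) that, of I w x0] that unfolding v_def by force
      have binding_I: "expected_payoff J (opponent_payoff w) y0 i = v'" if "i \<in> I" for i
        using False security_level_le[OF fin(1) that, of J "opponent_payoff w" y0] that unfolding v'_def by force
      have "v = (\<Sum>j\<in>J. y0 j * expected_payoff I w x0 j)"
        using mixed_expectation_const[OF y0(1), of v] binding_J by simp
      also have "\<dots> = - (\<Sum>i\<in>I. x0 i * expected_payoff J (opponent_payoff w) y0 i)"
        by (rule sum_expected_payoff_opponent)
      also have "\<dots> = - v'"
        using mixed_expectation_const[OF x0(1), of v'] binding_I by simp
      finally show ?thesis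
        by simp
    qed
  qed
  have "- expected_payoff J (opponent_payoff w) y0 i \<le> expected_payoff I w x0 j"
    if "i \<in> I" "j \<in> J" for i j
    using value_order security_level_le[OF fin(1) that(1), of J "opponent_payoff w" y0]
      security_level_le[OF fin(2) that(2), of I w x0]
    unfolding v_def v'_def by linarith
  then show ?case
    unfolding has_saddle_point_def using x0(1) y0(1) by blast
qed

lemma v1_eq_sum_expected_payoff: "v1 S T w \<sigma> \<tau> = (\<Sum>j\<in>T. \<tau> j * expected_payoff S w \<sigma> j)"
  unfolding v1_def expected_payoff_def
  by (subst sum.swap) (simp add: sum_distrib_left algebra_simps)

lemma v1_opponent_payoff: "v1 T S (opponent_payoff w) \<tau> \<sigma> = - v1 S T w \<sigma> \<tau>"
proof -
  have "v1 S T w \<sigma> \<tau> = - (\<Sum>i\<in>S. \<sigma> i * expected_payoff T (opponent_payoff w) \<tau> i)"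
    unfolding v1_eq_sum_expected_payoff by (rule sum_expected_payoff_opponent)
  then show ?thesis
    by (simp add: v1_eq_sum_expected_payoff)
qed

lemma v2_eq_v1_opponent_payoff: "v2 S T w = v1 T S (opponent_payoff w)"
  by (simp add: fun_eq_iff v2_def v1_opponent_payoff)

lemma security_level_le_v1: "finite T \<Longrightarrow> mixed T \<tau> \<Longrightarrow> security_level S T w \<sigma> \<le> v1 S T w \<sigma> \<tau>"
  unfolding v1_eq_sum_expected_payoff by (rule security_level_le_mixed)

lemma INF_v1_eq_security_level:
  assumes "finite T" "T \<noteq> {}"
  shows "(INF \<tau>\<in>{\<tau>. mixed T \<tau>}. v1 S T w \<sigma> \<tau>) = security_level S T w \<sigma>"
proof (rule cInf_eq_minimum)
  obtain t where t: "t \<in> T" "expected_payoff S w \<sigma> t = security_level S T w \<sigma>"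
    using security_level_attained[OF assms] by blast
  then have "security_level S T w \<sigma> = v1 S T w \<sigma> (pure t)"
    unfolding v1_eq_sum_expected_payoff using sum_pure_mult[OF assms(1)] by simp
  moreover have "pure t \<in> {\<tau>. mixed T \<tau>}"
    using mixed_pure[OF assms(1) t(1)] by simp
  ultimately show "security_level S T w \<sigma> \<in> v1 S T w \<sigma> ` {\<tau>. mixed T \<tau>}"
    by (rule image_eqI)
next
  fix v
  assume "v \<in> v1 S T w \<sigma> ` {\<tau>. mixed T \<tau>}"
  then show "security_level S T w \<sigma> \<le> v"
    using security_level_le_v1[OF assms(1)] by auto
qed

lemma binding_column_pure_best_response:
  assumes "finite T" "t \<in> T" "expected_payoff S w \<pi> t = security_level S T w \<pi>"
  shows "pure_best_response t T (v1 T S (opponent_payoff w)) \<pi>"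
  unfolding pure_best_response_def v1_opponent_payoff
proof (intro conjI allI impI)
  fix \<tau>
  assume "mixed T \<tau>"
  then have "security_level S T w \<pi> \<le> v1 S T w \<pi> \<tau>"
    by (rule security_level_le_v1[OF assms(1)])
  moreover have "v1 S T w \<pi> (pure t) = security_level S T w \<pi>"
    unfolding v1_eq_sum_expected_payoff using sum_pure_mult[OF assms(1,2)] assms(3) by simp
  ultimately show "- v1 S T w \<pi> \<tau> \<le> - v1 S T w \<pi> (pure t)"
    by simp
qed (fact assms(2))

lemma restricted_eq_strategy_mixed: "restricted_eq_strategy \<pi> P T v \<Longrightarrow> mixed P \<pi>"
  by (simp add: restricted_eq_strategy_def)

lemma restricted_eq_strategy_security_bound:
  assumes "finite T" "T \<noteq> {}"
    and eq: "restricted_eq_strategy \<pi> P T (v1 S T w)"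
    and closed: "\<not> (\<exists>t. pure_best_response t T (v1 T S (opponent_payoff w)) \<pi> \<and> t \<notin> Q)"
    and "mixed P \<sigma>"
  obtains t where "t \<in> Q" "expected_payoff S w \<sigma> t \<le> security_level S T w \<pi>"
proof -
  have "\<And>\<sigma>'. mixed P \<sigma>' \<Longrightarrow> security_level S T w \<sigma>' \<le> security_level S T w \<pi>"
    using eq unfolding restricted_eq_strategy_def INF_v1_eq_security_level[OF assms(1,2)] by blast
  with restricted_eq_strategy_mixed[OF eq]
  obtain t where t: "t \<in> T" "expected_payoff S w \<pi> t = security_level S T w \<pi>"
    and bound: "expected_payoff S w \<sigma> t \<le> security_level S T w \<pi>"
    using maximin_local_optimality[OF assms(1,2) _ \<open>mixed P \<sigma>\<close>] by metis
  have "pure_best_response t T (v1 T S (opponent_payoff w)) \<pi>"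
    using binding_column_pure_best_response[OF assms(1) t] .
  then have "t \<in> Q"
    using closed by blast
  then show ?thesis
    using bound by (rule that)
qed

lemma nash_eq_if_security_levels:
  assumes "finite S1" "finite S2" "mixed S1 \<pi>1" "mixed S2 \<pi>2"
    and "- security_level S2 S1 (opponent_payoff u) \<pi>2 \<le> security_level S1 S2 u \<pi>1"
  shows "nash_eq S1 S2 u \<pi>1 \<pi>2"
  unfolding nash_eq_def
proof (intro conjI allI impI)
  fix \<sigma>1
  assume "mixed S1 \<sigma>1"
  then have "security_level S2 S1 (opponent_payoff u) \<pi>2 \<le> v1 S2 S1 (opponent_payoff u) \<pi>2 \<sigma>1"
    by (rule security_level_le_v1[OF assms(1)])
  then have "security_level S2 S1 (opponent_payoff u) \<pi>2 \<le> - v1 S1 S2 u \<sigma>1 \<pi>2"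
    by (simp add: v1_opponent_payoff)
  moreover have "security_level S1 S2 u \<pi>1 \<le> v1 S1 S2 u \<pi>1 \<pi>2"
    using security_level_le_v1[OF assms(2,4)] .
  ultimately show "v1 S1 S2 u \<sigma>1 \<pi>2 \<le> v1 S1 S2 u \<pi>1 \<pi>2"
    using assms(5) by linarith
next
  fix \<sigma>2
  assume "mixed S2 \<sigma>2"
  then have "security_level S1 S2 u \<pi>1 \<le> v1 S1 S2 u \<pi>1 \<sigma>2"
    by (rule security_level_le_v1[OF assms(2)])
  moreover have "security_level S2 S1 (opponent_payoff u) \<pi>2 \<le> - v1 S1 S2 u \<pi>1 \<pi>2"
    using security_level_le_v1[OF assms(1,3), of S2 "opponent_payoff u" \<pi>2]
    by (simp add: v1_opponent_payoff)
  ultimately show "v2 S1 S2 u \<sigma>2 \<pi>1 \<le> v2 S1 S2 u \<pi>2 \<pi>1"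
    using assms(5) unfolding v2_def by linarith
qed (fact assms(3), fact assms(4))

theorem proposition2:
  fixes S1 :: "'a set" and S2 :: "'b set" and u :: "'a \<Rightarrow> 'b \<Rightarrow> real"
    and P1 :: "'a set" and P2 :: "'b set"
    and \<pi>1 :: "'a \<Rightarrow> real" and \<pi>2 :: "'b \<Rightarrow> real"
  assumes "finite S1" and "finite S2"
    and "P1 \<subseteq> S1" and "P2 \<subseteq> S2" and "P1 \<noteq> {}" and "P2 \<noteq> {}"
    and "restricted_eq_strategy \<pi>1 P1 S2 (v1 S1 S2 u)"
    and "restricted_eq_strategy \<pi>2 P2 S1 (v2 S1 S2 u)"
    and "\<not> (\<exists>s. pure_best_response s S1 (v1 S1 S2 u) \<pi>2 \<and> s \<notin> P1)"
    and "\<not> (\<exists>s. pure_best_response s S2 (v2 S1 S2 u) \<pi>1 \<and> s \<notin> P2)"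
  shows "nash_eq S1 S2 u \<pi>1 \<pi>2"
proof -
  note fin = finite_subset[OF assms(3,1)] finite_subset[OF assms(4,2)]
  have "S1 \<noteq> {}" "S2 \<noteq> {}"
    using assms(3-6) by auto
  obtain x y where x: "mixed P1 x" and y: "mixed P2 y"
    and saddle: "\<forall>s\<in>P1. \<forall>t\<in>P2. - expected_payoff P2 (opponent_payoff u) y s \<le> expected_payoff P1 u x t"
    using minimax_has_saddle_point[OF fin assms(5,6)] unfolding has_saddle_point_def by blast
  obtain t where t: "t \<in> P2" "expected_payoff S1 u x t \<le> security_level S1 S2 u \<pi>1"
    using restricted_eq_strategy_security_bound[OF assms(2) \<open>S2 \<noteq> {}\<close> assms(7)
        assms(10)[unfolded v2_eq_v1_opponent_payoff] x] .
  obtain s where s: "s \<in> P1"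
    "expected_payoff S2 (opponent_payoff u) y s \<le> security_level S2 S1 (opponent_payoff u) \<pi>2"
    using restricted_eq_strategy_security_bound[where w = "opponent_payoff u",
        unfolded opponent_payoff_opponent_payoff,
        OF assms(1) \<open>S1 \<noteq> {}\<close> assms(8)[unfolded v2_eq_v1_opponent_payoff] assms(9) y] .
  have "- expected_payoff P2 (opponent_payoff u) y s \<le> expected_payoff P1 u x t"
    using saddle s(1) t(1) by blast
  then have "- security_level S2 S1 (opponent_payoff u) \<pi>2 \<le> security_level S1 S2 u \<pi>1"
    using s(2) t(2) expected_payoff_support[OF x assms(3,1), of u t]
      expected_payoff_support[OF y assms(4,2), of "opponent_payoff u" s]
    by linarith
  then show ?thesis
    using nash_eq_if_security_levels[OF assms(1,2)
        mixed_subset[OF restricted_eq_strategy_mixed[OF assms(7)] assms(3,1)]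
        mixed_subset[OF restricted_eq_strategy_mixed[OF assms(8)] assms(4,2)]] by simp
qed

end
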